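(* Let $n\ge 2$, $k>k(n)$, and let $0<z_1<z_2$ be the two positive roots of $z\mapsto H(z,k)$. Then for every $z\in[z_1,z_2]$ the quintuple $(z+1,\,k,\,1,\,z+1,\,k+1)$ is admissible.
   Context: $H(z,k)=-nz^3+(k^2-3n)z^2-(3n+2k)z-(n-1)$; $k(n)=3\sqrt n\cos\big(\tfrac13\arccos(1/\sqrt n)\big)$. A quintuple $(a,b,c,d,\theta)$ is admissible if $d\ge a>c>0$, $\theta>b\ge 0$, and $(a-c)^2\theta^2-a(\theta-b)\big[(2\theta+na)(a-c)+a(n-1)(\theta-b)\big]\ge 0$. *)

theory Defs
  imports Complex_Main
begin

definition H :: "nat \<Rightarrow> real \<Rightarrow> real \<Rightarrow> real" where
  "H n z k = - real n * z ^ 3 + (k ^ 2 - 3 * real n) * z ^ 2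
             - (3 * real n + 2 * k) * z - (real n - 1)"

definition kcrit :: "nat \<Rightarrow> real" where
  "kcrit n = 3 * sqrt (real n) * cos (arccos (1 / sqrt (real n)) / 3)"

definition admissible :: "nat \<Rightarrow> real \<Rightarrow> real \<Rightarrow> real \<Rightarrow> real \<Rightarrow> real \<Rightarrow> bool" where
  "admissible n a b c d \<theta> \<longleftrightarrow>
     d \<ge> a \<and> a > c \<and> c > 0 \<and> \<theta> > b \<and> b \<ge> 0 \<and>
     (a - c)^2 * \<theta>^2 - a * (\<theta> - b) * ((2 * \<theta> + real n * a) * (a - c)
        + a * (real n - 1) * (\<theta> - b)) \<ge> 0"

end

theory Submission
  imports Defs
begin

text \<open>For the quintuple \<open>(z+1, k, 1, z+1, k+1)\<close> the admissibility expression is exactly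
  \<open>H(z,k)\<close>. Since \<open>H(0,k) = 1 - n < 0\<close> and the leading coefficient is \<open>-n\<close>, Vieta forces the
  third root of \<open>H(\<cdot>,k)\<close> to be negative, so \<open>H(\<cdot>,k) = -n(w-z\<^sub>1)(w-z\<^sub>2)(w-r)\<close> with \<open>r < 0\<close>
  is nonnegative on \<open>[z\<^sub>1,z\<^sub>2]\<close>. The hypothesis \<open>k > k(n)\<close> is only needed for \<open>k \<ge> 0\<close>.\<close>

lemma kcrit_pos:
  assumes "n \<ge> 1"
  shows "kcrit n > 0"
proof -
  have s: "sqrt (real n) \<ge> 1" using assms by simp
  then have "-1 \<le> 1 / sqrt (real n)" "1 / sqrt (real n) \<le> 1"
    by (auto simp: divide_simps) (use s in linarith)
  then have "0 \<le> arccos (1 / sqrt (real n))" "arccos (1 / sqrt (real n)) \<le> pi"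
    using arccos_lbound arccos_ubound by auto
  then have "cos (arccos (1 / sqrt (real n)) / 3) > 0"
    by (intro cos_gt_zero_pi) (use pi_gt_zero in linarith)+
  with s show ?thesis unfolding kcrit_def by simp
qed

lemma cubic_factor_two_roots:
  fixes a b c d z1 z2 w :: real
  assumes "a \<noteq> 0" "z1 \<noteq> 0" "z2 \<noteq> 0" "z1 \<noteq> z2"
    and "a * z1^3 + b * z1^2 + c * z1 + d = 0"
    and "a * z2^3 + b * z2^2 + c * z2 + d = 0"
  shows "a * w^3 + b * w^2 + c * w + d = a * (w - z1) * (w - z2) * (w + d / (a * z1 * z2))"
proof -
  define r where "r = - d / (a * z1 * z2)"
  define \<alpha> where "\<alpha> = b + a * (z1 + z2 + r)"
  define \<beta> where "\<beta> = c - a * (z1 * z2 + z1 * r + z2 * r)"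
  have ar: "a * z1 * z2 * r = - d" unfolding r_def using assms(1-3) by simp
  have diff: "a * x^3 + b * x^2 + c * x + d - a * (x - z1) * (x - z2) * (x - r) = x * (\<alpha> * x + \<beta>)"
    for x
    unfolding \<alpha>_def \<beta>_def using ar
    by (simp add: algebra_simps power2_eq_square power3_eq_cube)
  have "\<alpha> * z1 + \<beta> = 0" using diff[of z1] assms(2,5) by simp
  moreover have "\<alpha> * z2 + \<beta> = 0" using diff[of z2] assms(3,6) by simp
  ultimately have "\<alpha> * (z2 - z1) = 0"
    by (metis diff_self right_diff_distrib add_diff_cancel_right)
  with assms(4) have "\<alpha> = 0" by simp
  with \<open>\<alpha> * z1 + \<beta> = 0\<close> have "\<beta> = 0" by simp
  with diff[of w] \<open>\<alpha> = 0\<close> show ?thesis by (simp add: r_def)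
qed

lemma H_nonneg_between_roots:
  assumes "n \<ge> 1" "0 < z1" "z1 < z2" "H n z1 k = 0" "H n z2 k = 0"
    and "z1 \<le> z" "z \<le> z2"
  shows "H n z k \<ge> 0"
proof -
  define r where "r = (real n - 1) / (real n * z1 * z2)"
  have cubic: "H n w k = (- real n) * w^3 + (k^2 - 3 * real n) * w^2
      + (- (3 * real n + 2 * k)) * w + (- (real n - 1))" for w
    unfolding H_def by (simp add: algebra_simps)
  have "H n z k = (- real n) * (z - z1) * (z - z2) * (z + (- (real n - 1)) / ((- real n) * z1 * z2))"
    unfolding cubic
  proof (rule cubic_factor_two_roots)
    show "- real n \<noteq> 0" "z1 \<noteq> 0" "z2 \<noteq> 0" "z1 \<noteq> z2" using assms(1-3) by auto
  qed (use assms(4,5) cubic in metis)+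
  also have "(- (real n - 1)) / ((- real n) * z1 * z2) = r" unfolding r_def by (simp add: minus_divide_left)
  finally have "H n z k = (- real n) * (z - z1) * (z - z2) * (z + r)" .
  moreover have "0 \<le> r" unfolding r_def using assms(1-3) by simp
  then have "0 \<le> real n * ((z - z1) * (z2 - z) * (z + r))"
    using assms(2,6,7) by (intro mult_nonneg_nonneg) auto
  ultimately show ?thesis by (simp add: algebra_simps)
qed

lemma admissible_shift_iff_H_nonneg:
  "admissible n (z + 1) k 1 (z + 1) (k + 1) \<longleftrightarrow> 0 < z \<and> 0 \<le> k \<and> 0 \<le> H n z k"
proof -
  have "(z + 1 - 1)^2 * (k + 1)^2 - (z + 1) * (k + 1 - k) *
          ((2 * (k + 1) + real n * (z + 1)) * (z + 1 - 1) + (z + 1) * (real n - 1) * (k + 1 - k))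
        = H n z k"
    unfolding H_def by (simp add: algebra_simps power2_eq_square power3_eq_cube)
  then show ?thesis unfolding admissible_def by auto
qed

theorem mainTheorem6:
  fixes n :: nat and k z1 z2 z :: real
  assumes "n \<ge> 2"
    and "k > kcrit n"
    and "0 < z1" and "z1 < z2"
    and "{w. 0 < w \<and> H n w k = 0} = {z1, z2}"
    and "z1 \<le> z" and "z \<le> z2"
  shows "admissible n (z + 1) k 1 (z + 1) (k + 1)"
proof -
  have "n \<ge> 1" using assms(1) by simp
  have "0 \<le> k" using kcrit_pos[OF \<open>n \<ge> 1\<close>] assms(2) by linarith
  moreover have "H n z1 k = 0" "H n z2 k = 0" using assms(5) by blast+
  then have "0 \<le> H n z k"
    using H_nonneg_between_roots \<open>n \<ge> 1\<close> assms(3,4,6,7) by blast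
  ultimately show ?thesis
    unfolding admissible_shift_iff_H_nonneg using assms(3,6) by simp
qed

end
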